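(* Let $A$ be an algebra over a field with multiplication $\star$ satisfying the Tortken identity $$(a\star b)\star(c\star d)-(a\star d)\star(c\star b)=(a,b,c)\star d-(a,d,c)\star b\quad\text{for all }a,b,c,d\in A.$$ (i) If $A$ has a right unit (an element $e$ with $a\star e=a$ for all $a$), then $a\star(b\star c+c\star b)=2(a\star b)\star c$ for all $a,b,c\in A$. (ii) If $A$ has a left unit (an element $e$ with $e\star a=a$ for all $a$), then $A$ is associative and commutative.
   Context: The associator is $(a,b,c)=a\star(b\star c)-(a\star b)\star c$. *)

theory Defs
  imports Complex_Main
begin

definition is_algebra :: "('k::field \<Rightarrow> 'a::ab_group_add \<Rightarrow> 'a) \<Rightarrow> ('a \<Rightarrow> 'a \<Rightarrow> 'a) \<Rightarrow> bool" where
  "is_algebra scale mult \<longleftrightarrow> vector_space scale \<and>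
     (\<forall>x y z. mult (x + y) z = mult x z + mult y z) \<and>
     (\<forall>x y z. mult x (y + z) = mult x y + mult x z) \<and>
     (\<forall>c x y. mult (scale c x) y = scale c (mult x y)) \<and>
     (\<forall>c x y. mult x (scale c y) = scale c (mult x y))"

definition associator :: "('a::ab_group_add \<Rightarrow> 'a \<Rightarrow> 'a) \<Rightarrow> 'a \<Rightarrow> 'a \<Rightarrow> 'a \<Rightarrow> 'a" where
  "associator mult a b c = mult a (mult b c) - mult (mult a b) c"

definition tortken :: "('a::ab_group_add \<Rightarrow> 'a \<Rightarrow> 'a) \<Rightarrow> bool" where
  "tortken mult \<longleftrightarrow> (\<forall>a b c d.
     mult (mult a b) (mult c d) - mult (mult a d) (mult c b)
       = mult (associator mult a b c) d - mult (associator mult a d c) b)"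

end

theory Submission
  imports Defs
begin

text \<open>Both parts come from specialising the Tortken identity at the unit.
With a right unit e, the instance (a,e,e,d) shows that a(ed) = ad, and then the instance
(a,b,c,e) collapses to (ab)c - a(cb) = (a,b,c), which rearranges to a(bc + cb) = 2(ab)c.
With a left unit e, the instance (e,b,c,d) has vanishing associators and reads
b(cd) = d(cb); taking c = e gives commutativity, and then a(bc) = c(ba) = (ab)c.\<close>

lemma is_algebra_mult_zero_left:
  assumes "is_algebra scale mult"
  shows "mult 0 x = 0"
  using assms unfolding is_algebra_def by (metis add_cancel_right_left add_0)

lemma is_algebra_mult_add_right:
  assumes "is_algebra scale mult"
  shows "mult x (y + z) = mult x y + mult x z"
  using assms unfolding is_algebra_def by blast

lemma is_algebra_scale_two:
  fixes scale :: "'k::field \<Rightarrow> 'a::ab_group_add \<Rightarrow> 'a"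
  assumes "is_algebra scale mult"
  shows "scale 2 x = x + x"
proof -
  interpret vector_space scale
    using assms unfolding is_algebra_def by blast
  show ?thesis
    using scale_left_distrib[of 1 1 x] by simp
qed

lemma tortken_instance:
  assumes "tortken mult"
  shows "mult (mult a b) (mult c d) - mult (mult a d) (mult c b)
           = mult (associator mult a b c) d - mult (associator mult a d c) b"
  using assms unfolding tortken_def by blast

lemma tortken_right_unit_absorb:
  assumes "tortken mult" and zero_left: "\<And>x. mult 0 x = 0"
    and unit: "\<And>a. mult a e = a"
  shows "mult a (mult e d) = mult a d"
  using tortken_instance[OF assms(1), of a e e d]
  by (simp add: unit associator_def zero_left)

lemma tortken_right_unit_associator:
  assumes "tortken mult" and zero_left: "\<And>x. mult 0 x = 0"
    and unit: "\<And>a. mult a e = a"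
  shows "mult (mult a b) c - mult a (mult c b) = associator mult a b c"
  using tortken_instance[OF assms(1), of a b c e]
  by (simp add: unit associator_def zero_left tortken_right_unit_absorb[OF assms])

lemma tortken_right_unit_symmetrized:
  assumes "tortken mult" and "\<And>x. mult 0 x = 0"
    and "\<And>a. mult a e = a"
    and add_right: "\<And>x y z. mult x (y + z) = mult x y + mult x z"
  shows "mult a (mult b c + mult c b) = mult (mult a b) c + mult (mult a b) c"
  using tortken_right_unit_associator[OF assms(1-3), of a b c]
  unfolding add_right associator_def
  by (simp add: eq_diff_eq diff_eq_eq algebra_simps)

lemma tortken_left_unit_cyclic:
  assumes "tortken mult" and zero_left: "\<And>x. mult 0 x = 0"
    and unit: "\<And>a. mult e a = a"
  shows "mult b (mult c d) = mult d (mult c b)"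
  using tortken_instance[OF assms(1), of e b c d]
  by (simp add: unit associator_def zero_left)

lemma tortken_left_unit_commute:
  assumes "tortken mult" and "\<And>x. mult 0 x = 0"
    and unit: "\<And>a. mult e a = a"
  shows "mult a b = mult b a"
  using tortken_left_unit_cyclic[OF assms, of a e b] by (simp add: unit)

lemma tortken_left_unit_assoc:
  assumes "tortken mult" and "\<And>x. mult 0 x = 0"
    and "\<And>a. mult e a = a"
  shows "mult a (mult b c) = mult (mult a b) c"
proof -
  note comm = tortken_left_unit_commute[OF assms]
  have "mult a (mult b c) = mult c (mult b a)"
    by (rule tortken_left_unit_cyclic[OF assms])
  also have "\<dots> = mult (mult a b) c"
    by (simp add: comm[of c] comm[of b a])
  finally show ?thesis .
qed

theorem mainTheorem2:
  fixes scale :: "'k::field \<Rightarrow> 'a::ab_group_add \<Rightarrow> 'a"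
    and mult :: "'a \<Rightarrow> 'a \<Rightarrow> 'a"
  assumes "is_algebra scale mult"
    and "tortken mult"
  shows "((\<exists>e. \<forall>a. mult a e = a) \<longrightarrow>
            (\<forall>a b c. mult a (mult b c + mult c b) = scale 2 (mult (mult a b) c)))
       \<and> ((\<exists>e. \<forall>a. mult e a = a) \<longrightarrow>
            (\<forall>a b c. mult a (mult b c) = mult (mult a b) c) \<and> (\<forall>a b. mult a b = mult b a))"
proof -
  note zero_left = is_algebra_mult_zero_left[OF assms(1)]
  have "mult a (mult b c + mult c b) = scale 2 (mult (mult a b) c)"
    if right_unit: "\<And>a. mult a e = a" for e a b c
    unfolding is_algebra_scale_two[OF assms(1)]
    using tortken_right_unit_symmetrized[OF assms(2) zero_left right_unit
        is_algebra_mult_add_right[OF assms(1)]] .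
  moreover have "mult a (mult b c) = mult (mult a b) c" "mult a b = mult b a"
    if left_unit: "\<And>a. mult e a = a" for e a b c
    using tortken_left_unit_assoc[OF assms(2) zero_left left_unit]
      tortken_left_unit_commute[OF assms(2) zero_left left_unit] by blast+
  ultimately show ?thesis
    by blast
qed

end
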